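(* Every efficiently structured polyomino is crystallized.
   Context: A polyomino is a finite union of closed unit squares (tiles) of the square lattice, any two meeting (if at all) in a whole edge, whose interior is connected. Its holes are the bounded connected components of its complement in the plane; $h(A)$ is the number of holes and $|A|$ the number of tiles. The area of a hole is the number of unit squares needed to fill it. For $h\ge1$, $g(h)=\min\{|A|: h(A)=h\}$, and a polyomino with $h$ holes is crystallized if it has $g(h)$ tiles. The dual graph of $A$ has a vertex for each tile and an edge between two tiles sharing an edge; $A$ is acyclic if its dual graph is a tree. The perimeter of $A$ consists of the unit edges on its topological boundary; those bounding a hole form the hole perimeter, the others the outer perimeter, whose number of edges is $p_o(A)$. A polyomino with $n$ tiles and $h$ holes has minimal outer perimeter if $p_o(A)=2\lceil 2\sqrt{n+h}\,\rceil$. A polyomino is efficiently structured if it is acyclic, each of its holes has area one, and it has minimal outer perimeter. *)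

theory Defs
  imports Complex_Main
begin

text \<open>Discrete model: the tile with lower-left corner (i,j) is the closed unit square
[i,i+1] x [j,j+1]; a set of tiles is a finite set of cells in int x int.\<close>

type_synonym cell = "int \<times> int"

definition adj :: "cell \<Rightarrow> cell \<Rightarrow> bool" where
  "adj c d \<longleftrightarrow> \<bar>fst c - fst d\<bar> + \<bar>snd c - snd d\<bar> = 1"

definition adj_rel :: "cell set \<Rightarrow> (cell \<times> cell) set" where
  "adj_rel S = {(c, d). c \<in> S \<and> d \<in> S \<and> adj c d}"

text \<open>Polyomino: finite nonempty set of tiles with connected interior
(equivalently, tiles connected through shared edges).\<close>
definition polyomino :: "cell set \<Rightarrow> bool" where
  "polyomino A \<longleftrightarrow> finite A \<and> A \<noteq> {} \<and> (\<forall>c\<in>A. \<forall>d\<in>A. (c, d) \<in> (adj_rel A)\<^sup>*)"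

text \<open>Connected components of a set of cells under edge adjacency.
For the complement of a polyomino these are exactly the connected components
of the (open) complement of the union of tiles.\<close>
definition components :: "cell set \<Rightarrow> cell set set" where
  "components S = {(adj_rel S)\<^sup>* `` {c} | c. c \<in> S}"

text \<open>Holes: bounded (= finite) connected components of the complement.\<close>
definition holes :: "cell set \<Rightarrow> cell set set" where
  "holes A = {K \<in> components (- A). finite K}"

definition num_holes :: "cell set \<Rightarrow> nat" where
  "num_holes A = card (holes A)"

definition g :: "nat \<Rightarrow> nat" where
  "g h = (LEAST n. \<exists>A. polyomino A \<and> num_holes A = h \<and> card A = n)"

definition crystallized :: "cell set \<Rightarrow> bool" where
  "crystallized A \<longleftrightarrow> polyomino A \<and> num_holes A \<ge> 1 \<and> card A = g (num_holes A)"

text \<open>Dual graph acyclic: no cycle v_0,...,v_k (k >= 2, distinct vertices) in the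
adjacency graph of the tiles. Together with connectedness this means the dual graph is a tree.\<close>
definition acyclic_poly :: "cell set \<Rightarrow> bool" where
  "acyclic_poly A \<longleftrightarrow> polyomino A \<and>
     \<not> (\<exists>vs. length vs \<ge> 3 \<and> distinct vs \<and> set vs \<subseteq> A \<and>
            (\<forall>i. Suc i < length vs \<longrightarrow> adj (vs ! i) (vs ! Suc i)) \<and>
            adj (last vs) (hd vs))"

text \<open>A unit edge of the perimeter is represented by the pair (c,d) with c a tile and
d a non-tile cell sharing that edge. Outer perimeter: those whose outside cell d
does not lie in a hole.\<close>
definition outer_perimeter :: "cell set \<Rightarrow> nat" where
  "outer_perimeter A = card {(c, d). c \<in> A \<and> d \<notin> A \<and> adj c d \<and> d \<notin> \<Union>(holes A)}"

definition min_outer_perimeter :: "cell set \<Rightarrow> bool" where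
  "min_outer_perimeter A \<longleftrightarrow>
     int (outer_perimeter A) = 2 * \<lceil>2 * sqrt (real (card A + num_holes A))\<rceil>"

definition efficiently_structured :: "cell set \<Rightarrow> bool" where
  "efficiently_structured A \<longleftrightarrow> polyomino A \<and> acyclic_poly A \<and>
     (\<forall>K\<in>holes A. card K = 1) \<and> min_outer_perimeter A"

end

theory Submission
  imports Defs
begin

(* Count the sides of the tiles: 4 n = 2 e + p_o + p_h, where e is the number of edges of the dual
   graph (card (adj_rel B) = 2 e), p_o the outer and p_h the hole perimeter.  For an efficiently
   structured A with n tiles and h holes, e = n - 1, p_h = 4 h and p_o = 2 k with
   k = ceil (2 sqrt (n + h)); hence n <= k + 2 h - 1 and (k - 1)^2 < 4 (n + h).
   A polyomino B with m < n tiles, h holes and a W x T bounding box has e >= m - 1 (it is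
   connected), p_o >= 2 (W + T) (every row and column of the box ends in two outer edges),
   p_h >= 4 h and m + h <= W T.  Elementary arithmetic then forces m + h = W T and
   m = W + T + 2 h - 1.  The first equation says that B with its holes fills the box, so the
   boundary ring of the box lies in B and is a cycle of the dual graph; then e >= m, contradicting
   the second equation. *)

definition neighbours :: "cell \<Rightarrow> cell set" where
  "neighbours c = {(fst c + 1, snd c), (fst c - 1, snd c), (fst c, snd c + 1), (fst c, snd c - 1)}"

lemma adj_iff_neighbours: "adj c d \<longleftrightarrow> d \<in> neighbours c"
  unfolding adj_def neighbours_def by (cases c; cases d) (auto simp: abs_if prod_eq_iff)

lemma finite_neighbours [simp]: "finite (neighbours c)"
  unfolding neighbours_def by simp

lemma card_neighbours: "card (neighbours c) = 4"
  unfolding neighbours_def by (cases c) auto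

lemma adj_sym: "adj c d \<Longrightarrow> adj d c"
  unfolding adj_def by (simp add: abs_minus_commute)

lemma adj_irrefl [simp]: "\<not> adj c c"
  unfolding adj_def by simp

lemma unit_step_iff:
  fixes v :: "int \<times> int"
  shows "\<bar>fst v\<bar> + \<bar>snd v\<bar> = 1 \<longleftrightarrow> v \<in> {(1, 0), (-1, 0), (0, 1), (0, -1)}"
  by (cases v) (auto; arith)

lemma sym_adj_rel: "sym (adj_rel S)"
  unfolding sym_def adj_rel_def using adj_sym by auto

lemma adj_pairs_eq_Sigma: "{(c, d). c \<in> S \<and> adj c d} = Sigma S neighbours"
  by (auto simp: adj_iff_neighbours)

lemma finite_adj_pairs: "finite S \<Longrightarrow> finite {(c, d). c \<in> S \<and> adj c d}"
  unfolding adj_pairs_eq_Sigma by simp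

lemma card_adj_pairs: "finite S \<Longrightarrow> card {(c, d). c \<in> S \<and> adj c d} = 4 * card S"
  unfolding adj_pairs_eq_Sigma by (simp add: card_neighbours)

lemma finite_adj_rel: "finite S \<Longrightarrow> finite (adj_rel S)"
  by (rule finite_subset[OF _ finite_adj_pairs]) (auto simp: adj_rel_def)

section \<open>Connected components of the complement\<close>

lemma component_subset: "K \<in> components C \<Longrightarrow> K \<subseteq> C"
proof
  fix x assume "K \<in> components C" and "x \<in> K"
  then obtain c where "(c, x) \<in> (adj_rel C)\<^sup>*" "c \<in> C"
    unfolding components_def by blast
  then show "x \<in> C" by (induction rule: rtrancl_induct) (auto simp: adj_rel_def)
qed

lemma component_nonempty: "K \<in> components C \<Longrightarrow> K \<noteq> {}"
  unfolding components_def by auto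

lemma component_closed:
  assumes "K \<in> components C" "d \<in> K" "e \<in> C" "adj d e"
  shows "e \<in> K"
proof -
  obtain c where K: "K = (adj_rel C)\<^sup>* `` {c}" using assms(1) unfolding components_def by blast
  have "(d, e) \<in> adj_rel C" using assms component_subset unfolding adj_rel_def by blast
  with assms(2) show ?thesis unfolding K by (auto intro: rtrancl_into_rtrancl)
qed

lemma components_disjoint:
  assumes "K1 \<in> components C" "K2 \<in> components C" "d \<in> K1" "d \<in> K2"
  shows "K1 = K2"
proof -
  obtain c1 c2 where K: "K1 = (adj_rel C)\<^sup>* `` {c1}" "K2 = (adj_rel C)\<^sup>* `` {c2}"
    using assms(1,2) unfolding components_def by blast
  have sym: "sym ((adj_rel C)\<^sup>*)" using sym_adj_rel sym_rtrancl by blast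
  have "(c1, c2) \<in> (adj_rel C)\<^sup>*" "(c2, c1) \<in> (adj_rel C)\<^sup>*"
    using assms(3,4) K sym by (auto intro: rtrancl_trans dest: symD)
  then show ?thesis unfolding K by (auto intro: rtrancl_trans)
qed

definition ray :: "cell \<Rightarrow> int \<times> int \<Rightarrow> nat \<Rightarrow> cell" where
  "ray c v j = (fst c + int j * fst v, snd c + int j * snd v)"

lemma ray_ray: "ray (ray c v i) v j = ray c v (i + j)"
  by (simp add: ray_def algebra_simps)

lemma adj_ray_Suc: "\<bar>fst v\<bar> + \<bar>snd v\<bar> = 1 \<Longrightarrow> adj (ray c v j) (ray c v (Suc j))"
  unfolding ray_def adj_def by (simp add: algebra_simps)

lemma inj_ray: "\<bar>fst v\<bar> + \<bar>snd v\<bar> = 1 \<Longrightarrow> inj (ray c v)"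
  by (rule injI) (auto simp: ray_def prod_eq_iff split: if_splits)

lemma component_infinite_if_ray:
  assumes K: "K \<in> components C" and d: "d \<in> K" and v: "\<bar>fst v\<bar> + \<bar>snd v\<bar> = 1"
    and ray: "\<And>j. ray d v j \<in> C"
  shows "infinite K"
proof -
  have "ray d v j \<in> K" for j
  proof (induction j)
    case 0
    then show ?case using d by (simp add: ray_def)
  next
    case (Suc j)
    then show ?case using component_closed[OF K _ ray adj_ray_Suc[OF v]] by blast
  qed
  then have "range (ray d v) \<subseteq> K" by auto
  moreover have "infinite (range (ray d v))"
    using inj_ray[OF v] by (simp add: finite_image_iff)
  ultimately show ?thesis using finite_subset by blast
qed

lemma hole_subset: "K \<in> holes B \<Longrightarrow> K \<subseteq> - B"
  unfolding holes_def using component_subset by blast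

lemma holes_disjoint: "K1 \<in> holes B \<Longrightarrow> K2 \<in> holes B \<Longrightarrow> K1 \<noteq> K2 \<Longrightarrow> K1 \<inter> K2 = {}"
  unfolding holes_def using components_disjoint by blast

lemma hole_closed: "K \<in> holes B \<Longrightarrow> d \<in> K \<Longrightarrow> adj d e \<Longrightarrow> e \<notin> B \<Longrightarrow> e \<in> K"
  unfolding holes_def using component_closed by blast

section \<open>Perimeter edges\<close>

definition outer_edges :: "cell set \<Rightarrow> (cell \<times> cell) set" where
  "outer_edges B = {(c, d). c \<in> B \<and> d \<notin> B \<and> adj c d \<and> d \<notin> \<Union>(holes B)}"

definition hole_edges :: "cell set \<Rightarrow> cell set \<Rightarrow> (cell \<times> cell) set" where
  "hole_edges B K = {(c, d). c \<in> B \<and> adj c d \<and> d \<in> K}"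

lemma outer_perimeter_eq_card: "outer_perimeter B = card (outer_edges B)"
  unfolding outer_perimeter_def outer_edges_def by simp

lemma finite_outer_edges: "finite B \<Longrightarrow> finite (outer_edges B)"
  by (rule finite_subset[OF _ finite_adj_pairs]) (auto simp: outer_edges_def)

lemma finite_hole_edges: "finite K \<Longrightarrow> finite (hole_edges B K)"
proof -
  assume "finite K"
  have "hole_edges B K \<subseteq> prod.swap ` Sigma K neighbours"
    unfolding hole_edges_def by (auto simp: image_iff adj_iff_neighbours[symmetric] intro: adj_sym)
  then show ?thesis using \<open>finite K\<close> finite_subset by fastforce
qed

lemma four_mult_card_eq_perimeter:
  assumes "finite B" "finite (holes B)"
  shows "4 * card B = card (adj_rel B) + card (outer_edges B) + (\<Sum>K\<in>holes B. card (hole_edges B K))"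
proof -
  have pairs: "{(c, d). c \<in> B \<and> adj c d} = adj_rel B \<union> outer_edges B \<union> (\<Union>K\<in>holes B. hole_edges B K)"
    unfolding adj_rel_def outer_edges_def hole_edges_def using hole_subset by fastforce
  have fin: "finite (adj_rel B)" "finite (outer_edges B)" "finite (\<Union>K\<in>holes B. hole_edges B K)"
    using finite_adj_pairs[OF assms(1)] unfolding pairs by auto
  have "card (\<Union>K\<in>holes B. hole_edges B K) = (\<Sum>K\<in>holes B. card (hole_edges B K))"
  proof (rule card_UN_disjoint[OF assms(2)])
    show "\<forall>K\<in>holes B. finite (hole_edges B K)"
      by (auto simp: holes_def finite_hole_edges)
    show "\<forall>K1\<in>holes B. \<forall>K2\<in>holes B. K1 \<noteq> K2 \<longrightarrow> hole_edges B K1 \<inter> hole_edges B K2 = {}"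
      using holes_disjoint unfolding hole_edges_def by blast
  qed
  moreover have "adj_rel B \<inter> outer_edges B = {}"
    "(adj_rel B \<union> outer_edges B) \<inter> (\<Union>K\<in>holes B. hole_edges B K) = {}"
    unfolding adj_rel_def outer_edges_def hole_edges_def using hole_subset by fastforce+
  ultimately show ?thesis
    using card_adj_pairs[OF assms(1)] fin unfolding pairs by (simp add: card_Un_disjoint)
qed

lemma card_hole_edges_unit_hole:
  assumes K: "K \<in> holes B" and "card K = 1"
  shows "card (hole_edges B K) = 4"
proof -
  obtain d where d: "K = {d}" using \<open>card K = 1\<close> card_1_singletonE by blast
  have "c \<in> B" if "adj c d" for c
    using hole_closed[OF K _ adj_sym[OF that]] that unfolding d by fastforce
  then have "hole_edges B K = (\<lambda>c. (c, d)) ` {c. adj c d}"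
    unfolding hole_edges_def d by auto
  also have "{c. adj c d} = neighbours d"
    using adj_iff_neighbours adj_sym by blast
  finally show ?thesis by (simp add: card_image inj_on_def card_neighbours)
qed

text \<open>A cell of \<open>K\<close> extremal in direction \<open>v\<close> has a tile as its \<open>v\<close>-neighbour.\<close>

lemma hole_edge_in_direction:
  assumes K: "K \<in> holes B" and v: "\<bar>fst v\<bar> + \<bar>snd v\<bar> = 1"
  obtains d where "d \<in> K" "(ray d v 1, d) \<in> hole_edges B K"
proof -
  define f where "f c = fst v * fst c + snd v * snd c" for c
  have "finite K" "K \<noteq> {}" using K component_nonempty unfolding holes_def by auto
  then obtain d where d: "d \<in> K" "f d = Max (f ` K)"
    using Max_in[of "f ` K"] by fastforce
  have "f (ray d v 1) = f d + 1"
    using v unfolding f_def ray_def unit_step_iff by (auto simp: algebra_simps)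
  then have "ray d v 1 \<notin> K" using d \<open>finite K\<close> by (metis Max_ge finite_imageI image_eqI less_add_one not_le)
  moreover have "adj d (ray d v 1)" using adj_ray_Suc[OF v, of d 0] by (simp add: ray_def)
  ultimately have "ray d v 1 \<in> B" using hole_closed[OF K d(1)] by blast
  with \<open>adj d (ray d v 1)\<close> d(1) show ?thesis
    by (intro that[of d]) (auto simp: hole_edges_def intro: adj_sym)
qed

lemma four_le_card_hole_edges:
  assumes K: "K \<in> holes B"
  shows "4 \<le> card (hole_edges B K)"
proof -
  let ?dir = "\<lambda>(c, d). (fst c - fst d, snd c - snd d)"
  have "v \<in> ?dir ` hole_edges B K" if v: "\<bar>fst v\<bar> + \<bar>snd v\<bar> = 1" for v
  proof -
    obtain d where "(ray d v 1, d) \<in> hole_edges B K" using hole_edge_in_direction[OF K v] .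
    then show ?thesis by (force simp: ray_def)
  qed
  then have "{(1, 0), (-1, 0), (0, 1), (0, -1)} \<subseteq> ?dir ` hole_edges B K"
    unfolding unit_step_iff by blast
  moreover have "finite (hole_edges B K)" using K finite_hole_edges unfolding holes_def by simp
  ultimately have "card {(1::int, 0::int), (-1, 0), (0, 1), (0, -1)} \<le> card (hole_edges B K)"
    by (meson card_image_le card_mono finite_imageI le_trans)
  then show ?thesis by simp
qed

section \<open>Edge counts of trees and of graphs containing a cycle\<close>

definition degree_ge_two :: "cell set \<Rightarrow> bool" where
  "degree_ge_two Y \<longleftrightarrow> (\<forall>y\<in>Y. 2 \<le> card {z\<in>Y. adj y z})"

definition tile_path :: "cell set \<Rightarrow> cell list \<Rightarrow> bool" where
  "tile_path Y vs \<longleftrightarrow> vs \<noteq> [] \<and> distinct vs \<and> set vs \<subseteq> Y \<and>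
     (\<forall>i. Suc i < length vs \<longrightarrow> adj (vs ! i) (vs ! Suc i))"

lemma acyclic_poly_iff:
  "acyclic_poly A \<longleftrightarrow> polyomino A \<and> \<not> (\<exists>vs. tile_path A vs \<and> 3 \<le> length vs \<and> adj (last vs) (hd vs))"
  unfolding acyclic_poly_def tile_path_def by (metis list.size(3) not_numeral_le_zero)

lemma tile_path_Cons:
  "vs \<noteq> [] \<Longrightarrow> tile_path Y (z # vs) \<longleftrightarrow> z \<in> Y \<and> z \<notin> set vs \<and> adj z (hd vs) \<and> tile_path Y vs"
  unfolding tile_path_def by (auto simp: nth_Cons' hd_conv_nth split: if_splits) (metis Suc_pred)

lemma tile_path_take: "tile_path Y vs \<Longrightarrow> 0 < i \<Longrightarrow> tile_path Y (take i vs)"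
  unfolding tile_path_def by (auto dest: in_set_takeD)

lemma ex_longest_tile_path:
  assumes "finite Y" "y \<in> Y"
  obtains vs where "tile_path Y vs" "\<And>ws. tile_path Y ws \<Longrightarrow> length ws \<le> length vs"
proof -
  let ?P = "\<lambda>l. \<exists>ws. tile_path Y ws \<and> length ws = l"
  have one: "?P 1" using assms(2) by (intro exI[of _ "[y]"]) (simp add: tile_path_def)
  have bounded: "\<forall>l. ?P l \<longrightarrow> l \<le> card Y"
    using assms(1) card_mono distinct_card unfolding tile_path_def by metis
  obtain l where "?P l" "\<forall>l'. ?P l' \<longrightarrow> l' \<le> l"
    using Nat.ex_has_greatest_nat[OF one bounded] by blast
  then show ?thesis using that by blast
qed

text \<open>The head of a longest path has all its neighbours on the path; a second one closes a cycle.\<close>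

lemma tile_cycle_if_degree_ge_two:
  assumes "finite Y" "Y \<noteq> {}" "degree_ge_two Y"
  obtains vs where "tile_path Y vs" "3 \<le> length vs" "adj (last vs) (hd vs)"
proof -
  obtain vs where vs: "tile_path Y vs" and longest: "\<And>ws. tile_path Y ws \<Longrightarrow> length ws \<le> length vs"
    using ex_longest_tile_path assms(1,2) by blast
  define v where "v = hd vs"
  have "vs \<noteq> []" "set vs \<subseteq> Y" using vs by (auto simp: tile_path_def)
  then have "v \<in> Y" unfolding v_def by auto
  define N where "N = {z\<in>Y. adj v z}"
  have "N \<subseteq> set vs"
  proof
    fix z assume "z \<in> N"
    show "z \<in> set vs"
    proof (rule ccontr)
      assume "z \<notin> set vs"
      with \<open>z \<in> N\<close> have "tile_path Y (z # vs)"
        using vs \<open>vs \<noteq> []\<close> by (simp add: tile_path_Cons N_def v_def adj_sym)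
      then show False using longest by fastforce
    qed
  qed
  have "\<not> N \<subseteq> {vs ! 1}"
    using assms(3) \<open>v \<in> Y\<close> card_mono[of "{vs ! 1}" N] unfolding degree_ge_two_def N_def by force
  then obtain z where "z \<in> N" "z \<noteq> vs ! 1" by blast
  moreover obtain i where "i < length vs" "vs ! i = z"
    using \<open>z \<in> N\<close> \<open>N \<subseteq> set vs\<close> by (meson in_set_conv_nth subsetD)
  ultimately have i: "i < length vs" "vs ! i \<in> N" "i \<noteq> 1" by auto
  have "i \<noteq> 0"
  proof
    assume "i = 0"
    then show False using i(2) \<open>vs \<noteq> []\<close> by (simp add: N_def v_def hd_conv_nth)
  qed
  then have "tile_path Y (take (Suc i) vs)" "3 \<le> length (take (Suc i) vs)"
    using vs i tile_path_take by auto
  moreover have "adj (last (take (Suc i) vs)) (hd (take (Suc i) vs))"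
  proof -
    have "last (take (Suc i) vs) = vs ! i" "hd (take (Suc i) vs) = v"
      using i(1) \<open>vs \<noteq> []\<close> by (simp_all add: last_conv_nth hd_conv_nth v_def)
    then show ?thesis using i(2) by (simp add: N_def adj_sym)
  qed
  ultimately show ?thesis using that by blast
qed

lemma card_adj_rel_remove:
  assumes "finite S"
  shows "card (adj_rel S) \<le> card (adj_rel (S - {v})) + 2 * card {z\<in>S. adj v z}"
proof -
  let ?N = "{z\<in>S. adj v z}"
  have "adj_rel S \<subseteq> adj_rel (S - {v}) \<union> Pair v ` ?N \<union> (\<lambda>z. (z, v)) ` ?N"
    unfolding adj_rel_def using adj_sym by auto
  then have "card (adj_rel S) \<le> card (adj_rel (S - {v}) \<union> Pair v ` ?N \<union> (\<lambda>z. (z, v)) ` ?N)"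
    using assms by (intro card_mono) (auto simp: finite_adj_rel)
  also have "\<dots> \<le> card (adj_rel (S - {v})) + card (Pair v ` ?N) + card ((\<lambda>z. (z, v)) ` ?N)"
    by (meson add_le_mono card_Un_le le_refl order_trans)
  also have "\<dots> \<le> card (adj_rel (S - {v})) + 2 * card ?N"
    using card_image_le[of ?N] assms by (simp add: card_image inj_on_def)
  finally show ?thesis .
qed

text \<open>Remove a vertex of degree at most one and induct.\<close>

lemma card_adj_rel_le_if_no_core:
  assumes "finite S" and no_core: "\<And>Y. Y \<subseteq> S \<Longrightarrow> Y \<noteq> {} \<Longrightarrow> \<not> degree_ge_two Y"
  shows "S \<noteq> {} \<Longrightarrow> card (adj_rel S) + 2 \<le> 2 * card S"
  using assms(1)
proof (induction rule: finite_remove_induct)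
  case (remove A)
  obtain v where v: "v \<in> A" "card {z\<in>A. adj v z} \<le> 1"
    using no_core[OF remove.hyps(3,2)] unfolding degree_ge_two_def by force
  have card_A: "Suc (card (A - {v})) = card A"
    using card_Suc_Diff1[OF remove.hyps(1) v(1)] .
  show ?case
  proof (cases "A - {v} = {}")
    case True
    then have "A = {v}" using v(1) by auto
    then have "adj_rel A = {}" unfolding adj_rel_def by auto
    then show ?thesis using card_A by simp
  next
    case False
    then show ?thesis
      using remove.IH[OF v(1) False] card_adj_rel_remove[OF remove.hyps(1), of v] v(2) card_A
      by simp
  qed
qed simp

lemma card_adj_rel_le_acyclic:
  assumes "acyclic_poly A"
  shows "card (adj_rel A) + 2 \<le> 2 * card A"
proof (rule card_adj_rel_le_if_no_core)
  show "finite A" "A \<noteq> {}" using assms unfolding acyclic_poly_def polyomino_def by auto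
  show "\<not> degree_ge_two Y" if Y: "Y \<subseteq> A" "Y \<noteq> {}" for Y
  proof
    assume "degree_ge_two Y"
    then obtain vs where "tile_path Y vs" "3 \<le> length vs" "adj (last vs) (hd vs)"
      using tile_cycle_if_degree_ge_two Y finite_subset[OF Y(1) \<open>finite A\<close>] by blast
    moreover have "tile_path A vs" using \<open>tile_path Y vs\<close> Y(1) by (auto simp: tile_path_def)
    ultimately show False using assms unfolding acyclic_poly_iff by blast
  qed
qed

locale rooted_spanning_tree =
  fixes S :: "cell set" and r :: cell and parent :: "cell \<Rightarrow> cell" and depth :: "cell \<Rightarrow> nat"
  assumes finite_S: "finite S" and root_in: "r \<in> S"
    and parent_adj: "v \<in> S - {r} \<Longrightarrow> (parent v, v) \<in> adj_rel S"
    and depth_parent: "v \<in> S - {r} \<Longrightarrow> depth (parent v) < depth v"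
begin

definition tree_pairs :: "(cell \<times> cell) set" where
  "tree_pairs = (\<lambda>v. (v, parent v)) ` (S - {r}) \<union> (\<lambda>v. (parent v, v)) ` (S - {r})"

lemma tree_pairs_subset: "tree_pairs \<subseteq> adj_rel S"
proof -
  have "(v, parent v) \<in> adj_rel S" if "v \<in> S - {r}" for v
    using parent_adj[OF that] sym_adj_rel by (rule symD[rotated])
  then show ?thesis using parent_adj unfolding tree_pairs_def by blast
qed

lemma tree_pairs_swap: "(a, b) \<in> tree_pairs \<longleftrightarrow> (b, a) \<in> tree_pairs"
  unfolding tree_pairs_def by auto

lemma card_tree_pairs: "card tree_pairs + 2 = 2 * card S"
proof -
  have "card ((\<lambda>v. (v, parent v)) ` (S - {r})) = card S - 1"
    "card ((\<lambda>v. (parent v, v)) ` (S - {r})) = card S - 1"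
    using finite_S root_in by (subst card_image; auto simp: inj_on_def)+
  moreover have "(v, parent v) \<noteq> (parent w, w)" if "v \<in> S - {r}" "w \<in> S - {r}" for v w
    using depth_parent[OF that(1)] depth_parent[OF that(2)] by auto
  then have "(\<lambda>v. (v, parent v)) ` (S - {r}) \<inter> (\<lambda>v. (parent v, v)) ` (S - {r}) = {}"
    by blast
  ultimately have "card tree_pairs = (card S - 1) + (card S - 1)"
    unfolding tree_pairs_def using finite_S by (simp add: card_Un_disjoint)
  moreover have "0 < card S" using finite_S root_in card_gt_0_iff by blast
  ultimately show ?thesis by linarith
qed

lemma card_adj_rel_ge: "2 * card S \<le> card (adj_rel S) + 2"
  using card_mono[OF finite_adj_rel[OF finite_S] tree_pairs_subset] card_tree_pairs by simp

text \<open>At a cell of \<open>Y\<close> of maximal depth, an edge into \<open>Y\<close> not leading to the parent is not a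
  tree edge.\<close>

lemma card_adj_rel_ge_if_core:
  assumes Y: "Y \<subseteq> S" "Y \<noteq> {}" "degree_ge_two Y"
  shows "2 * card S \<le> card (adj_rel S)"
proof -
  have "finite Y" using Y(1) finite_S finite_subset by blast
  moreover have "Max (depth ` Y) \<in> depth ` Y" using \<open>finite Y\<close> Y(2) by simp
  ultimately obtain y where "y \<in> Y" "depth y = Max (depth ` Y)" by auto
  then have y: "y \<in> Y" "\<And>y'. y' \<in> Y \<Longrightarrow> depth y' \<le> depth y"
    using \<open>finite Y\<close> by auto
  have "\<not> {z\<in>Y. adj y z} \<subseteq> {parent y}"
    using Y(3) y(1) card_mono[of "{parent y}" "{z\<in>Y. adj y z}"] unfolding degree_ge_two_def by force
  then obtain u where u: "u \<in> Y" "adj y u" "u \<noteq> parent y" by blast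
  have "(y, u) \<notin> tree_pairs"
    using u y Y(1) depth_parent[of u] unfolding tree_pairs_def by fastforce
  then have "(u, y) \<notin> tree_pairs" using tree_pairs_swap by blast
  have "insert (y, u) (insert (u, y) tree_pairs) \<subseteq> adj_rel S"
    using tree_pairs_subset u y Y(1) adj_sym unfolding adj_rel_def by blast
  then have "card (insert (y, u) (insert (u, y) tree_pairs)) \<le> card (adj_rel S)"
    using finite_adj_rel[OF finite_S] by (rule card_mono[rotated])
  moreover have "finite tree_pairs" using finite_S by (simp add: tree_pairs_def)
  moreover have "y \<noteq> u" using u(2) by auto
  ultimately show ?thesis
    using \<open>(y, u) \<notin> tree_pairs\<close> \<open>(u, y) \<notin> tree_pairs\<close> card_tree_pairs by simp
qed

end

lemma polyomino_rooted_spanning_tree: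
  assumes "polyomino S" "r \<in> S"
  obtains parent depth where "rooted_spanning_tree S r parent depth"
proof -
  let ?R = "adj_rel S"
  define depth where "depth v = (LEAST k. (r, v) \<in> ?R ^^ k)" for v
  have "\<exists>u. (u, v) \<in> ?R \<and> depth u < depth v" if v: "v \<in> S - {r}" for v
  proof -
    have "\<exists>k. (r, v) \<in> ?R ^^ k"
      using assms v unfolding polyomino_def by (metis DiffD1 rtrancl_power)
    then have reach: "(r, v) \<in> ?R ^^ depth v" unfolding depth_def by (rule LeastI_ex)
    then obtain m where m: "depth v = Suc m"
      using v by (cases "depth v") auto
    then obtain u where "(r, u) \<in> ?R ^^ m" "(u, v) \<in> ?R" using reach by auto
    moreover from this(1) have "depth u \<le> m" unfolding depth_def by (rule Least_le)
    ultimately show ?thesis using m by (intro exI[of _ u]) auto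
  qed
  then obtain parent where "\<And>v. v \<in> S - {r} \<Longrightarrow> (parent v, v) \<in> ?R \<and> depth (parent v) < depth v"
    by metis
  then have "rooted_spanning_tree S r parent depth"
    using assms unfolding polyomino_def by unfold_locales auto
  then show ?thesis using that by blast
qed

lemma card_adj_rel_ge_polyomino:
  assumes "polyomino S"
  shows "2 * card S \<le> card (adj_rel S) + 2"
proof -
  obtain r where "r \<in> S" using assms unfolding polyomino_def by blast
  with assms obtain parent depth where "rooted_spanning_tree S r parent depth"
    by (rule polyomino_rooted_spanning_tree)
  then show ?thesis by (rule rooted_spanning_tree.card_adj_rel_ge)
qed

lemma card_adj_rel_ge_polyomino_core:
  assumes "polyomino S" "Y \<subseteq> S" "Y \<noteq> {}" "degree_ge_two Y"
  shows "2 * card S \<le> card (adj_rel S)"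
proof -
  obtain r where "r \<in> S" using assms unfolding polyomino_def by blast
  with assms(1) obtain parent depth where "rooted_spanning_tree S r parent depth"
    by (rule polyomino_rooted_spanning_tree)
  then show ?thesis using assms(2-4) by (rule rooted_spanning_tree.card_adj_rel_ge_if_core)
qed

section \<open>The bounding box\<close>

definition filled :: "cell set \<Rightarrow> cell set" where
  "filled B = B \<union> \<Union>(holes B)"

lemma outer_edge_at_end_of_ray:
  assumes c: "c \<in> B" and v: "\<bar>fst v\<bar> + \<bar>snd v\<bar> = 1" and beyond: "\<And>j. ray c v (Suc j) \<notin> B"
  shows "(c, ray c v 1) \<in> outer_edges B"
proof -
  have "ray c v 1 \<notin> K" if K: "K \<in> holes B" for K
  proof
    assume "ray c v 1 \<in> K"
    moreover have "ray (ray c v 1) v j \<in> - B" for j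
      using beyond[of j] by (simp add: ray_ray)
    ultimately have "infinite K" using component_infinite_if_ray K v unfolding holes_def by blast
    then show False using K unfolding holes_def by simp
  qed
  moreover have "adj c (ray c v 1)" using adj_ray_Suc[OF v, of c 0] by (simp add: ray_def)
  ultimately show ?thesis using c beyond[of 0] unfolding outer_edges_def by auto
qed

lemma outer_edge_on_ray:
  assumes B: "finite B" and c: "c \<in> B" and v: "\<bar>fst v\<bar> + \<bar>snd v\<bar> = 1"
  obtains m where "(ray c v m, ray c v (Suc m)) \<in> outer_edges B"
proof -
  let ?M = "ray c v -` B"
  have "finite ?M" using finite_vimageI[OF B inj_ray[OF v]] .
  moreover have "0 \<in> ?M" using c by (simp add: ray_def)
  ultimately have "Max ?M \<in> ?M" using Max_in by blast
  moreover have "ray c v (Max ?M + Suc j) \<notin> B" for j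
    using Max_ge[OF \<open>finite ?M\<close>, of "Max ?M + Suc j"] by auto
  ultimately have "(ray c v (Max ?M), ray c v (Suc (Max ?M))) \<in> outer_edges B"
    using outer_edge_at_end_of_ray[OF _ v, of "ray c v (Max ?M)" B] by (simp add: ray_ray)
  then show ?thesis using that by blast
qed

text \<open>\<open>line c\<close> identifies the line of cells through \<open>c\<close> parallel to \<open>v\<close>; each such line
  meeting \<open>B\<close> ends in an outer edge pointing in direction \<open>v\<close>.\<close>

lemma card_lines_le_outer_edges:
  assumes B: "finite B" and v: "\<bar>fst v\<bar> + \<bar>snd v\<bar> = 1"
  defines "line c \<equiv> if fst v = 0 then fst c else snd c"
  shows "card (line ` B) \<le> card {e \<in> outer_edges B. snd e = ray (fst e) v 1}"
    (is "_ \<le> card ?E")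
proof -
  have "line ` B \<subseteq> (line \<circ> fst) ` ?E"
  proof
    fix x assume "x \<in> line ` B"
    then obtain c where c: "c \<in> B" "x = line c" by blast
    then obtain m where "(ray c v m, ray c v (Suc m)) \<in> outer_edges B"
      using outer_edge_on_ray[OF B _ v] by blast
    moreover have "line (ray c v m) = line c"
      using v unfolding line_def ray_def unit_step_iff by auto
    ultimately show "x \<in> (line \<circ> fst) ` ?E"
      using c by (force simp: ray_ray)
  qed
  moreover have "finite ?E" using finite_outer_edges[OF B] by simp
  ultimately show ?thesis by (meson card_image_le card_mono finite_imageI le_trans)
qed

lemma card_outer_edges_ge:
  assumes B: "finite B"
  shows "2 * card (fst ` B) + 2 * card (snd ` B) \<le> card (outer_edges B)"
proof -
  define E where "E v = {e \<in> outer_edges B. snd e = ray (fst e) v 1}" for v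
  let ?U = "{(1, 0), (-1, 0), (0, 1), (0, -1)} :: (int \<times> int) set"
  have "card (\<Union>v\<in>?U. E v) = (\<Sum>v\<in>?U. card (E v))"
    by (rule card_UN_disjoint) (auto simp: E_def ray_def finite_outer_edges[OF B])
  also have "\<dots> = card (E (1, 0)) + card (E (-1, 0)) + card (E (0, 1)) + card (E (0, -1))"
    by simp
  finally have "card (E (1, 0)) + card (E (-1, 0)) + card (E (0, 1)) + card (E (0, -1))
      \<le> card (outer_edges B)"
    using card_mono[OF finite_outer_edges[OF B], of "\<Union>v\<in>?U. E v"] by (force simp: E_def)
  moreover have "card (snd ` B) \<le> card (E (1, 0))" "card (snd ` B) \<le> card (E (-1, 0))"
    "card (fst ` B) \<le> card (E (0, 1))" "card (fst ` B) \<le> card (E (0, -1))"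
    using card_lines_le_outer_edges[OF B, of "(1, 0)"] card_lines_le_outer_edges[OF B, of "(-1, 0)"]
      card_lines_le_outer_edges[OF B, of "(0, 1)"] card_lines_le_outer_edges[OF B, of "(0, -1)"]
    unfolding E_def by simp_all
  ultimately show ?thesis by linarith
qed

lemma hole_subset_box:
  assumes K: "K \<in> holes B"
  shows "K \<subseteq> fst ` B \<times> snd ` B"
proof
  fix d assume d: "d \<in> K"
  have no_ray: "\<exists>j. ray d v j \<in> B" if "\<bar>fst v\<bar> + \<bar>snd v\<bar> = 1" for v
    using component_infinite_if_ray[OF _ d that, of "- B"] K unfolding holes_def by auto
  obtain j1 j2 where "ray d (0, 1) j1 \<in> B" "ray d (1, 0) j2 \<in> B"
    using no_ray[of "(0, 1)"] no_ray[of "(1, 0)"] by auto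
  then show "d \<in> fst ` B \<times> snd ` B"
    unfolding ray_def by (cases d) (force simp: image_iff)
qed

lemma card_add_card_holes_le_filled:
  assumes B: "finite B" and H: "finite (holes B)"
  shows "card B + card (holes B) \<le> card (filled B)"
proof -
  have fin: "\<forall>K\<in>holes B. finite K" by (simp add: holes_def)
  have "card (holes B) = (\<Sum>K\<in>holes B. 1)" by simp
  also have "\<dots> \<le> (\<Sum>K\<in>holes B. card K)"
  proof (rule sum_mono)
    fix K assume "K \<in> holes B"
    then have "K \<noteq> {}" "finite K" using component_nonempty unfolding holes_def by auto
    then show "1 \<le> card K" by (simp add: Suc_le_eq card_gt_0_iff)
  qed
  also have "\<dots> = card (\<Union>(holes B))"
    using card_UN_disjoint[OF H fin] holes_disjoint by simp
  finally show ?thesis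
    using B H fin hole_subset unfolding filled_def by (subst card_Un_disjoint) auto
qed

lemma filled_subset_box: "filled B \<subseteq> fst ` B \<times> snd ` B"
proof -
  have "c \<in> fst ` B \<times> snd ` B" if "c \<in> B" for c
    using that by (cases c) force
  then show ?thesis using hole_subset_box unfolding filled_def by blast
qed

lemma card_filled_le_box:
  "finite B \<Longrightarrow> card (filled B) \<le> card (fst ` B) * card (snd ` B)"
  using card_mono[OF _ filled_subset_box] by (simp add: card_cartesian_product)

lemma card_add_num_holes_le_box:
  assumes "finite B" "finite (holes B)"
  shows "card B + num_holes B \<le> card (fst ` B) * card (snd ` B)"
  using card_add_card_holes_le_filled[OF assms] card_filled_le_box[OF assms(1)]
  unfolding num_holes_def by linarith

lemma filled_eq_box:
  assumes "finite B" "finite (holes B)"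
    and "card (fst ` B) * card (snd ` B) \<le> card B + num_holes B"
  shows "filled B = fst ` B \<times> snd ` B"
proof (rule card_subset_eq[OF _ filled_subset_box])
  show "card (filled B) = card (fst ` B \<times> snd ` B)"
    using card_add_card_holes_le_filled[OF assms(1,2)] card_filled_le_box[OF assms(1)] assms(3)
    unfolding num_holes_def card_cartesian_product by linarith
qed (use assms(1) in simp)

section \<open>A polyomino filling its bounding box contains a cycle\<close>

lemma image_rtrancl_adj_rel_interval:
  assumes f: "\<And>c d. adj c d \<Longrightarrow> \<bar>f c - f d\<bar> \<le> (1::int)"
    and path: "(c, d) \<in> (adj_rel B)\<^sup>*" and c: "c \<in> B"
  shows "{f c..f d} \<subseteq> f ` B"
  using path
proof (induction rule: rtrancl_induct)
  case base
  then show ?case using c by auto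
next
  case (step d e)
  then have "e \<in> B" "\<bar>f d - f e\<bar> \<le> 1" using f unfolding adj_rel_def by auto
  then have "{f c..f e} \<subseteq> {f c..f d} \<union> {f e}" by auto
  then show ?case using step.IH \<open>e \<in> B\<close> by blast
qed

lemma polyomino_image_interval:
  assumes B: "polyomino B" and f: "\<And>c d. adj c d \<Longrightarrow> \<bar>f c - f d\<bar> \<le> (1::int)"
  shows "f ` B = {Min (f ` B)..Max (f ` B)}"
proof
  have "finite B" "B \<noteq> {}" using B unfolding polyomino_def by auto
  then show "f ` B \<subseteq> {Min (f ` B)..Max (f ` B)}" by auto
  have "Min (f ` B) \<in> f ` B" "Max (f ` B) \<in> f ` B"
    using \<open>finite B\<close> \<open>B \<noteq> {}\<close> by simp_all
  then obtain c d where cd: "c \<in> B" "f c = Min (f ` B)" "d \<in> B" "f d = Max (f ` B)"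
    by (metis imageE)
  then have "(c, d) \<in> (adj_rel B)\<^sup>*" using B unfolding polyomino_def by blast
  from image_rtrancl_adj_rel_interval[of f, OF f this cd(1)]
  show "{Min (f ` B)..Max (f ` B)} \<subseteq> f ` B" unfolding cd(2,4) .
qed

definition rect_boundary :: "int \<Rightarrow> int \<Rightarrow> int \<Rightarrow> int \<Rightarrow> cell set" where
  "rect_boundary x0 x1 y0 y1 = {x0..x1} \<times> {y0..y1} - {x0<..<x1} \<times> {y0<..<y1}"

lemma two_le_card_adj:
  assumes "u1 \<in> Y" "u2 \<in> Y" "u1 \<noteq> u2" "adj y u1" "adj y u2"
  shows "2 \<le> card {z\<in>Y. adj y z}"
proof -
  have "finite {z\<in>Y. adj y z}"
    by (rule finite_subset[of _ "neighbours y"]) (auto simp: adj_iff_neighbours)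
  then show ?thesis using card_mono[of _ "{u1, u2}"] assms by fastforce
qed

lemma degree_ge_two_rect_boundary:
  assumes "x0 < x1" "y0 < y1"
  shows "degree_ge_two (rect_boundary x0 x1 y0 y1)"
  unfolding degree_ge_two_def
proof
  fix c assume "c \<in> rect_boundary x0 x1 y0 y1"
  then obtain a b where c: "c = (a, b)" "x0 \<le> a" "a \<le> x1" "y0 \<le> b" "b \<le> y1"
    and side: "a = x0 \<or> a = x1 \<or> b = y0 \<or> b = y1"
    unfolding rect_boundary_def by (cases c) auto
  let ?R = "rect_boundary x0 x1 y0 y1"
  consider "b = y0 \<or> b = y1" "x0 < a" "a < x1" | "a = x0 \<or> a = x1" "y0 < b" "b < y1"
    | "a = x0 \<or> a = x1" "b = y0 \<or> b = y1"
    using side c by linarith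
  then show "2 \<le> card {z\<in>?R. adj c z}"
  proof cases
    case 1
    then show ?thesis using assms unfolding c
      by (intro two_le_card_adj[of "(a - 1, b)" _ "(a + 1, b)"]) (auto simp: rect_boundary_def adj_def)
  next
    case 2
    then show ?thesis using assms unfolding c
      by (intro two_le_card_adj[of "(a, b - 1)" _ "(a, b + 1)"]) (auto simp: rect_boundary_def adj_def)
  next
    case 3
    then show ?thesis using assms unfolding c
      by (intro two_le_card_adj[of "(if a = x0 then a + 1 else a - 1, b)" _
            "(a, if b = y0 then b + 1 else b - 1)"]) (auto simp: rect_boundary_def adj_def)
  qed
qed

lemma hole_cell_in_interior:
  assumes filled: "filled B = {x0..x1} \<times> {y0..y1}" and d: "K \<in> holes B" "d \<in> K"
  shows "d \<in> {x0<..<x1} \<times> {y0<..<y1}"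
proof -
  have "e \<in> {x0..x1} \<times> {y0..y1}" if "adj d e" for e
    using hole_closed[OF d that] d(1) unfolding filled[symmetric] filled_def by blast
  from this[of "(fst d + 1, snd d)"] this[of "(fst d - 1, snd d)"]
    this[of "(fst d, snd d + 1)"] this[of "(fst d, snd d - 1)"]
  show ?thesis by (cases d) (auto simp: adj_def)
qed

lemma card_adj_rel_ge_if_filled_eq_box:
  assumes B: "polyomino B" and "holes B \<noteq> {}" and filled: "filled B = fst ` B \<times> snd ` B"
  shows "2 * card B \<le> card (adj_rel B)"
proof -
  define x0 where "x0 = Min (fst ` B)"
  define x1 where "x1 = Max (fst ` B)"
  define y0 where "y0 = Min (snd ` B)"
  define y1 where "y1 = Max (snd ` B)"
  have rect: "filled B = {x0..x1} \<times> {y0..y1}"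
    using filled polyomino_image_interval[OF B, of fst] polyomino_image_interval[OF B, of snd]
    unfolding x0_def x1_def y0_def y1_def by (auto simp: adj_def)
  obtain K d where "K \<in> holes B" "d \<in> K"
    using \<open>holes B \<noteq> {}\<close> component_nonempty unfolding holes_def by blast
  then have "d \<in> {x0<..<x1} \<times> {y0<..<y1}" by (rule hole_cell_in_interior[OF rect])
  then have "x0 < x1" "y0 < y1" by auto
  have "rect_boundary x0 x1 y0 y1 \<subseteq> B"
    using hole_cell_in_interior[OF rect] rect unfolding rect_boundary_def filled_def by blast
  moreover have "(x0, y0) \<in> rect_boundary x0 x1 y0 y1"
    using \<open>x0 < x1\<close> \<open>y0 < y1\<close> by (simp add: rect_boundary_def)
  ultimately show ?thesis
    using card_adj_rel_ge_polyomino_core[OF B] degree_ge_two_rect_boundary[OF \<open>x0 < x1\<close> \<open>y0 < y1\<close>]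
    by blast
qed

lemma polyomino_perimeter_bound:
  assumes B: "polyomino B" and H: "finite (holes B)"
  shows "2 * card (fst ` B) + 2 * card (snd ` B) + 4 * num_holes B + card (adj_rel B) \<le> 4 * card B"
proof -
  have "finite B" using B unfolding polyomino_def by simp
  have "(\<Sum>K\<in>holes B. 4) \<le> (\<Sum>K\<in>holes B. card (hole_edges B K))"
    by (rule sum_mono) (rule four_le_card_hole_edges)
  then have "4 * num_holes B \<le> (\<Sum>K\<in>holes B. card (hole_edges B K))"
    unfolding num_holes_def by simp
  then show ?thesis
    using four_mult_card_eq_perimeter[OF \<open>finite B\<close> H] card_outer_edges_ge[OF \<open>finite B\<close>] by linarith
qed

lemma ceiling_minus_one_squared_less:
  fixes y :: real
  assumes "0 < y"
  shows "(of_int \<lceil>y\<rceil> - 1)\<^sup>2 < y\<^sup>2"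
proof -
  have "1 \<le> \<lceil>y\<rceil>" using assms by simp
  then have "0 \<le> real_of_int \<lceil>y\<rceil> - 1" by simp
  moreover have "of_int \<lceil>y\<rceil> - 1 < y" using ceiling_correct[of y] by simp
  ultimately
  show ?thesis by (simp add: power_strict_mono)
qed

lemma efficiently_structured_tile_bounds:
  assumes A: "efficiently_structured A" and h: "1 \<le> num_holes A"
  defines "k \<equiv> \<lceil>2 * sqrt (real (card A + num_holes A))\<rceil>"
  shows "int (card A) \<le> k + 2 * int (num_holes A) - 1"
    and "(k - 1)\<^sup>2 < 4 * (int (card A) + int (num_holes A))"
proof -
  have "polyomino A" "acyclic_poly A" and unit: "\<forall>K\<in>holes A. card K = 1" and "min_outer_perimeter A"
    using A unfolding efficiently_structured_def by auto
  have "finite A" using \<open>polyomino A\<close> unfolding polyomino_def by simp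
  have "finite (holes A)" using h unfolding num_holes_def by (metis card.infinite not_one_le_zero)
  have "(\<Sum>K\<in>holes A. card (hole_edges A K)) = 4 * num_holes A"
    using card_hole_edges_unit_hole unit unfolding num_holes_def by simp
  then show "int (card A) \<le> k + 2 * int (num_holes A) - 1"
    using four_mult_card_eq_perimeter[OF \<open>finite A\<close> \<open>finite (holes A)\<close>]
      card_adj_rel_le_acyclic[OF \<open>acyclic_poly A\<close>] \<open>min_outer_perimeter A\<close>
    unfolding min_outer_perimeter_def outer_perimeter_eq_card k_def by linarith
  have "0 < 2 * sqrt (real (card A + num_holes A))" using h by simp
  then have "(real_of_int k - 1)\<^sup>2 < (2 * sqrt (real (card A + num_holes A)))\<^sup>2"
    unfolding k_def by (rule ceiling_minus_one_squared_less)
  also have "\<dots> = 4 * (real (card A) + real (num_holes A))" by (simp add: power_mult_distrib)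
  finally have "real_of_int ((k - 1)\<^sup>2) < real_of_int (4 * (int (card A) + int (num_holes A)))"
    by simp
  then show "(k - 1)\<^sup>2 < 4 * (int (card A) + int (num_holes A))" by (simp only: of_int_less_iff)
qed

text \<open>The hypotheses on \<open>n\<close> and \<open>k\<close> describe the efficiently structured polyomino, those on
  \<open>m\<close>, \<open>W\<close>, \<open>T\<close> a competitor with fewer tiles and a \<open>W \<times> T\<close> bounding box. The key
  inequality is \<open>W T < W + T + 3 h\<close>.\<close>

lemma smaller_competitor_tight:
  fixes n h k m W T :: int
  assumes A: "n \<le> k + 2 * h - 1" "(k - 1)\<^sup>2 < 4 * (n + h)" and "m < n"
    and B: "W + T + 2 * h - 1 \<le> m" "m + h \<le> W * T" "1 \<le> W" "1 \<le> T"
  shows "W * T = m + h" and "m = W + T + 2 * h - 1"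
proof -
  define s where "s = W + T"
  have "k\<^sup>2 - 2 * k + 1 < 4 * (n + h)" using A(2) by (simp add: power2_diff)
  then have k: "k\<^sup>2 - 6 * k + 5 < 12 * h" using A(1) by arith
  have "2 \<le> s" "s \<le> k - 1" using B \<open>m < n\<close> A(1) unfolding s_def by linarith+
  then have "0 \<le> (k - 1 - s) * (k - 5 + s)" by simp
  then have "s\<^sup>2 - 4 * s \<le> k\<^sup>2 - 6 * k + 5" by (simp add: algebra_simps power2_eq_square)
  moreover have "4 * (W * T) \<le> s\<^sup>2"
    using zero_le_power2[of "W - T"] unfolding s_def by (simp add: algebra_simps power2_eq_square)
  ultimately have "W * T < s + 3 * h" using k by linarith
  then show "W * T = m + h" "m = W + T + 2 * h - 1" using B unfolding s_def by linarith+
qed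

lemma efficiently_structured_card_le:
  assumes A: "efficiently_structured A" "1 \<le> num_holes A"
    and B: "polyomino B" "num_holes B = num_holes A"
  shows "card A \<le> card B"
proof (rule ccontr)
  assume "\<not> card A \<le> card B"
  define h k W T where "h = num_holes A" and "k = \<lceil>2 * sqrt (real (card A + h))\<rceil>"
    and "W = card (fst ` B)" and "T = card (snd ` B)"
  have "finite B" "B \<noteq> {}" using B(1) unfolding polyomino_def by auto
  then have "1 \<le> W" "1 \<le> T" unfolding W_def T_def by (simp_all add: Suc_le_eq card_gt_0_iff)
  have "finite (holes B)" "holes B \<noteq> {}"
    using A(2) B(2) unfolding num_holes_def by (auto intro: card_ge_0_finite)
  have "(k - 1)\<^sup>2 < 4 * (int (card A) + int h)" "int (card A) \<le> k + 2 * int h - 1"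
    using efficiently_structured_tile_bounds[OF A] unfolding k_def h_def by simp_all
  moreover have perim: "2 * W + 2 * T + 4 * h + card (adj_rel B) \<le> 4 * card B"
    using polyomino_perimeter_bound[OF B(1) \<open>finite (holes B)\<close>] B(2) unfolding W_def T_def h_def
    by simp
  then have "int W + int T + 2 * int h - 1 \<le> int (card B)"
    using card_adj_rel_ge_polyomino[OF B(1)] by linarith
  moreover have "int (card B) + int h \<le> int W * int T"
    using card_add_num_holes_le_box[OF \<open>finite B\<close> \<open>finite (holes B)\<close>] B(2)
    unfolding W_def T_def h_def by (metis of_nat_add of_nat_le_iff of_nat_mult)
  ultimately have "int W * int T = int (card B) + int h" "int (card B) = int W + int T + 2 * int h - 1"
    using smaller_competitor_tight[of "int (card A)" k "int h" "int (card B)" "int W" "int T"]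
      \<open>\<not> card A \<le> card B\<close> \<open>1 \<le> W\<close> \<open>1 \<le> T\<close> by auto
  then have "filled B = fst ` B \<times> snd ` B"
    using filled_eq_box[OF \<open>finite B\<close> \<open>finite (holes B)\<close>] B(2) unfolding W_def T_def h_def
    by (metis le_refl of_nat_add of_nat_eq_iff of_nat_mult)
  then have "2 * card B \<le> card (adj_rel B)"
    using card_adj_rel_ge_if_filled_eq_box B(1) \<open>holes B \<noteq> {}\<close> by blast
  with perim \<open>int (card B) = int W + int T + 2 * int h - 1\<close> show False by linarith
qed

theorem theorem4:
  fixes A :: "cell set"
  assumes "efficiently_structured A"
    and "num_holes A \<ge> 1"
  shows "crystallized A"
proof -
  have "polyomino A" using assms(1) unfolding efficiently_structured_def by simp
  have "g (num_holes A) = card A"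
    unfolding g_def
  proof (rule Least_equality)
    show "\<exists>B. polyomino B \<and> num_holes B = num_holes A \<and> card B = card A"
      using \<open>polyomino A\<close> by blast
    show "card A \<le> n" if "\<exists>B. polyomino B \<and> num_holes B = num_holes A \<and> card B = n" for n
      using that efficiently_structured_card_le[OF assms] by blast
  qed
  then show ?thesis using \<open>polyomino A\<close> assms(2) unfolding crystallized_def by simp
qed

end
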